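(* Let $\mathcal T=(G,\mathbf T^{(1)},\dots,\mathbf T^{(n)})$ be a tensor network with all $\mathbf T^{(i)}\neq0$ and contraction $\mathbf T\neq0$, and let $\epsilon>0$. Let $\delta=(\delta^{(i)})_{i=1}^n$ be a random sitewise perturbation such that all entries of all $\delta^{(i)}$ are independent with mean $0$, the entries of each $\delta^{(i)}$ have a common variance, and $\mathbb E\|\delta^{(i)}\|_F^2\le\epsilon^2\|\mathbf T^{(i)}\|_F^2$ for all $i$. Then, as $\epsilon\to0$, $$\mathbb E\,\mathscr E_r(\mathcal T,\delta)^2\le\epsilon^2\frac{\|M_{\overline{\mathcal T}}\|_F^2}{\|\overline{\mathbf T}\|_F^2}+O(\epsilon^3),$$ with equality (up to $O(\epsilon^3)$) when $\mathbb E\|\delta^{(i)}\|_F^2=\epsilon^2\|\mathbf T^{(i)}\|_F^2$ for all $i$. If instead all entries of all $\delta^{(i)}$ are independent, mean zero, with the same variance $\sigma^2$, then $\mathbb E\,\mathscr E_r(\mathcal T,\delta)^2=\sigma^2\frac{\|M_{\mathcal T}\|_F^2}{\|\mathbf T\|_F^2}+O(\sigma^3)$ as $\sigma\to0$.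
   Context: Tensor network setup: A tensor network $\mathcal T=(G,\mathbf T^{(1)},\dots,\mathbf T^{(n)})$ consists of a multigraph $G$ with vertices $v_1,\dots,v_n$, whose edges are either edges between distinct vertices (contracted legs) or self-loops (uncontracted legs), each edge having a dimension, and tensors $\mathbf T^{(j)}$ at $v_j$ with one mode per incident edge. Its contraction $\mathbf T=\mathscr T_G(\mathbf T^{(1)},\dots,\mathbf T^{(n)})$ is obtained by summing over all contracted-edge indices the product of the entries of all $\mathbf T^{(j)}$; it is multilinear in the $\mathbf T^{(j)}$. The environment matrix $M_{\mathbf T^{(j)}}$ of site $j$ is the matrix of the linear map $X\mapsto\mathrm{vec}(\mathscr T_G(\mathbf T^{(1)},\dots,X,\dots,\mathbf T^{(n)}))$ ($X$ in slot $j$) acting on $\mathrm{vec}(X)$. The environment matrix of the network is $M_{\mathcal T}=[M_{\mathbf T^{(1)}}\ \cdots\ M_{\mathbf T^{(n)}}]$, so $\|M_{\mathcal T}\|_F^2=\sum_i\|M_{\mathbf T^{(i)}}\|_F^2$. For a sitewise perturbation $\delta$ (tensors $\delta^{(i)}$ of the shapes of $\mathbf T^{(i)}$), $\hat{\mathbf T}=\mathscr T_G(\mathbf T^{(1)}+\delta^{(1)},\dots,\mathbf T^{(n)}+\delta^{(n)})$ and $\mathscr E_r(\mathcal T,\delta)=\|\hat{\mathbf T}-\mathbf T\|_F/\|\mathbf T\|_F$. Entrywise normalized network: $\overline{\mathcal T}=(G,\overline{\mathbf T}^{(1)},\dots,\overline{\mathbf T}^{(n)})$ with $\overline{\mathbf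 T}^{(j)}=\sqrt{N_j}\,\mathbf T^{(j)}/\|\mathbf T^{(j)}\|_F$, where $N_j$ is the number of entries of $\mathbf T^{(j)}$; $\overline{\mathbf T}$ is its contraction and $M_{\overline{\mathcal T}}$ its environment matrix. *)

theory Defs
  imports "HOL-Probability.Probability" "HOL-Library.Landau_Symbols"
begin

text \<open>
Tensor network graph: sites are 0..<n; edges form a finite set E of an arbitrary type;
ends e is the set of sites incident to edge e (one site: self-loop = uncontracted leg,
two sites: contracted leg between distinct sites); d e is the dimension of edge e.
An index assignment is a function from edges to nat, extensional (0 off the relevant edges).
A tensor at site j is a real function on site_idx j.
\<close>

definition tn_graph :: "nat \<Rightarrow> 'e set \<Rightarrow> ('e \<Rightarrow> nat set) \<Rightarrow> ('e \<Rightarrow> nat) \<Rightarrow> bool" where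
  "tn_graph n E ends d \<longleftrightarrow> finite E \<and>
     (\<forall>e\<in>E. ends e \<subseteq> {..<n} \<and> (card (ends e) = 1 \<or> card (ends e) = 2) \<and> d e \<ge> 1)"

definition open_edges :: "'e set \<Rightarrow> ('e \<Rightarrow> nat set) \<Rightarrow> 'e set" where
  "open_edges E ends = {e\<in>E. card (ends e) = 1}"

definition idx_on :: "'e set \<Rightarrow> ('e \<Rightarrow> nat) \<Rightarrow> ('e \<Rightarrow> nat) set" where
  "idx_on S d = {a. \<forall>e. (e \<in> S \<longrightarrow> a e < d e) \<and> (e \<notin> S \<longrightarrow> a e = 0)}"

definition site_edges :: "'e set \<Rightarrow> ('e \<Rightarrow> nat set) \<Rightarrow> nat \<Rightarrow> 'e set" where
  "site_edges E ends j = {e\<in>E. j \<in> ends e}"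

definition site_idx :: "'e set \<Rightarrow> ('e \<Rightarrow> nat set) \<Rightarrow> ('e \<Rightarrow> nat) \<Rightarrow> nat \<Rightarrow> ('e \<Rightarrow> nat) set" where
  "site_idx E ends d j = idx_on (site_edges E ends j) d"

definition out_idx :: "'e set \<Rightarrow> ('e \<Rightarrow> nat set) \<Rightarrow> ('e \<Rightarrow> nat) \<Rightarrow> ('e \<Rightarrow> nat) set" where
  "out_idx E ends d = idx_on (open_edges E ends) d"

definition restr :: "'e set \<Rightarrow> ('e \<Rightarrow> nat) \<Rightarrow> ('e \<Rightarrow> nat)" where
  "restr S a = (\<lambda>e. if e \<in> S then a e else 0)"

definition contract :: "nat \<Rightarrow> 'e set \<Rightarrow> ('e \<Rightarrow> nat set) \<Rightarrow> ('e \<Rightarrow> nat)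
    \<Rightarrow> (nat \<Rightarrow> ('e \<Rightarrow> nat) \<Rightarrow> real) \<Rightarrow> ('e \<Rightarrow> nat) \<Rightarrow> real" where
  "contract n E ends d T b =
     (\<Sum>a\<in>{a\<in>idx_on E d. restr (open_edges E ends) a = b}.
        \<Prod>j<n. T j (restr (site_edges E ends j) a))"

definition frob :: "('e \<Rightarrow> nat) set \<Rightarrow> (('e \<Rightarrow> nat) \<Rightarrow> real) \<Rightarrow> real" where
  "frob S f = sqrt (\<Sum>a\<in>S. (f a)\<^sup>2)"

definition site_norm :: "'e set \<Rightarrow> ('e \<Rightarrow> nat set) \<Rightarrow> ('e \<Rightarrow> nat)
    \<Rightarrow> (nat \<Rightarrow> ('e \<Rightarrow> nat) \<Rightarrow> real) \<Rightarrow> nat \<Rightarrow> real" where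
  "site_norm E ends d T j = frob (site_idx E ends d j) (T j)"

definition contract_norm :: "nat \<Rightarrow> 'e set \<Rightarrow> ('e \<Rightarrow> nat set) \<Rightarrow> ('e \<Rightarrow> nat)
    \<Rightarrow> (nat \<Rightarrow> ('e \<Rightarrow> nat) \<Rightarrow> real) \<Rightarrow> real" where
  "contract_norm n E ends d T = frob (out_idx E ends d) (contract n E ends d T)"

text \<open>Squared Frobenius norm of the environment matrix of site j: the column indexed by
  entry x is the vectorised contraction with the unit tensor e_x in slot j.\<close>
definition env_site_frob2 :: "nat \<Rightarrow> 'e set \<Rightarrow> ('e \<Rightarrow> nat set) \<Rightarrow> ('e \<Rightarrow> nat)
    \<Rightarrow> (nat \<Rightarrow> ('e \<Rightarrow> nat) \<Rightarrow> real) \<Rightarrow> nat \<Rightarrow> real" where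
  "env_site_frob2 n E ends d T j =
     (\<Sum>x\<in>site_idx E ends d j. \<Sum>b\<in>out_idx E ends d.
        (contract n E ends d (T(j := (\<lambda>a. if a = x then 1 else 0))) b)\<^sup>2)"

definition env_frob2 :: "nat \<Rightarrow> 'e set \<Rightarrow> ('e \<Rightarrow> nat set) \<Rightarrow> ('e \<Rightarrow> nat)
    \<Rightarrow> (nat \<Rightarrow> ('e \<Rightarrow> nat) \<Rightarrow> real) \<Rightarrow> real" where
  "env_frob2 n E ends d T = (\<Sum>j<n. env_site_frob2 n E ends d T j)"

definition normalize_tn :: "'e set \<Rightarrow> ('e \<Rightarrow> nat set) \<Rightarrow> ('e \<Rightarrow> nat)
    \<Rightarrow> (nat \<Rightarrow> ('e \<Rightarrow> nat) \<Rightarrow> real) \<Rightarrow> nat \<Rightarrow> ('e \<Rightarrow> nat) \<Rightarrow> real" where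
  "normalize_tn E ends d T = (\<lambda>j a. sqrt (real (card (site_idx E ends d j))) * T j a
                                    / site_norm E ends d T j)"

definition rel_err :: "nat \<Rightarrow> 'e set \<Rightarrow> ('e \<Rightarrow> nat set) \<Rightarrow> ('e \<Rightarrow> nat)
    \<Rightarrow> (nat \<Rightarrow> ('e \<Rightarrow> nat) \<Rightarrow> real) \<Rightarrow> (nat \<Rightarrow> ('e \<Rightarrow> nat) \<Rightarrow> real) \<Rightarrow> real" where
  "rel_err n E ends d T \<delta> =
     frob (out_idx E ends d)
       (\<lambda>b. contract n E ends d (\<lambda>j a. T j a + \<delta> j a) b - contract n E ends d T b)
     / contract_norm n E ends d T"

definition sitewise_noise :: "nat \<Rightarrow> 'e set \<Rightarrow> ('e \<Rightarrow> nat set) \<Rightarrow> ('e \<Rightarrow> nat)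
    \<Rightarrow> 'w measure \<Rightarrow> (nat \<Rightarrow> ('e \<Rightarrow> nat) \<Rightarrow> 'w \<Rightarrow> real) \<Rightarrow> bool" where
  "sitewise_noise n E ends d M \<delta> \<longleftrightarrow>
     prob_space M \<and>
     (\<forall>j<n. \<forall>a\<in>site_idx E ends d j.
        \<delta> j a \<in> borel_measurable M \<and> integrable M (\<lambda>\<omega>. (\<delta> j a \<omega>)\<^sup>2)
        \<and> integral\<^sup>L M (\<delta> j a) = 0) \<and>
     prob_space.indep_vars M (\<lambda>_. borel) (\<lambda>(j, a). \<delta> j a)
        {(j, a). j < n \<and> a \<in> site_idx E ends d j} \<and>
     (\<forall>j<n. \<exists>v. \<forall>a\<in>site_idx E ends d j.
        integral\<^sup>L M (\<lambda>\<omega>. (\<delta> j a \<omega> - integral\<^sup>L M (\<delta> j a))\<^sup>2) = v)"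

definition exp_site_sq :: "'e set \<Rightarrow> ('e \<Rightarrow> nat set) \<Rightarrow> ('e \<Rightarrow> nat)
    \<Rightarrow> 'w measure \<Rightarrow> (nat \<Rightarrow> ('e \<Rightarrow> nat) \<Rightarrow> 'w \<Rightarrow> real) \<Rightarrow> nat \<Rightarrow> real" where
  "exp_site_sq E ends d M \<delta> j =
     integral\<^sup>L M (\<lambda>\<omega>. (frob (site_idx E ends d j) (\<lambda>a. \<delta> j a \<omega>))\<^sup>2)"

definition exp_rel_err2 :: "nat \<Rightarrow> 'e set \<Rightarrow> ('e \<Rightarrow> nat set) \<Rightarrow> ('e \<Rightarrow> nat)
    \<Rightarrow> (nat \<Rightarrow> ('e \<Rightarrow> nat) \<Rightarrow> real) \<Rightarrow> 'w measure \<Rightarrow> (nat \<Rightarrow> ('e \<Rightarrow> nat) \<Rightarrow> 'w \<Rightarrow> real) \<Rightarrow> real" where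
  "exp_rel_err2 n E ends d T M \<delta> =
     integral\<^sup>L M (\<lambda>\<omega>. (rel_err n E ends d T (\<lambda>j a. \<delta> j a \<omega>))\<^sup>2)"

end

theory Submission
  imports Defs "HOL-Real_Asymp.Real_Asymp"
begin

(* Expand ||T^ - T||_F^2 as a double sum, over pairs (a, a') of full index assignments with the
   same open indices, of products (prod_j (T_j + delta_j) - prod_j T_j) evaluated at a and a'.
   Independence and zero mean make the expectation of every such term factor over the sites:
   site j contributes T_j(a_j) T_j(a'_j) + [a_j = a'_j] v_j, where v_j is the common variance
   of the entries of delta^(j).  Hence E ||T^ - T||_F^2 is a polynomial in v without constant
   term; its linear part is sum_j v_j ||M_(T^(j))||_F^2 and the rest is O(|v|^2).  The hypotheses
   give v_j <= eps^2 ||T^(j)||_F^2 / N_j (resp. v_j = sigma^2), so the linear part is the eps^2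
   term and the remainder is O(eps^4).  Rescaling site j by sqrt N_j / ||T^(j)||_F turns
   sum_j ||M_(T^(j))||_F^2 ||T^(j)||_F^2 / N_j / ||T||_F^2 into ||M_(Tbar)||_F^2 / ||Tbar||_F^2. *)

section \<open>Products of independent centred variables\<close>

lemma (in prob_space) expectation_mult_centered:
  fixes Z :: "'i \<Rightarrow> 'a \<Rightarrow> real"
  assumes ind: "indep_vars (\<lambda>_. borel) Z I" and I: "i \<in> I" "k \<in> I"
    and sq: "integrable M (\<lambda>\<omega>. (Z i \<omega>)\<^sup>2)" "integrable M (\<lambda>\<omega>. (Z k \<omega>)\<^sup>2)"
    and mean: "expectation (Z i) = 0" "expectation (Z k) = 0"
  shows "integrable M (\<lambda>\<omega>. Z i \<omega> * Z k \<omega>) \<and>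
    expectation (\<lambda>\<omega>. Z i \<omega> * Z k \<omega>) = (if i = k then expectation (\<lambda>\<omega>. (Z i \<omega>)\<^sup>2) else 0)"
proof (cases "i = k")
  case True
  then show ?thesis using sq by (simp add: power2_eq_square)
next
  case False
  have "random_variable borel (Z i)" "random_variable borel (Z k)"
    using ind I unfolding indep_vars_def by auto
  then have int: "integrable M (Z i)" "integrable M (Z k)"
    using sq square_integrable_imp_integrable by blast+
  have ind2: "indep_vars (\<lambda>_. borel) Z {i, k}"
    using indep_vars_subset[OF ind] I by auto
  have prod: "(\<lambda>\<omega>. Z i \<omega> * Z k \<omega>) = (\<lambda>\<omega>. \<Prod>l\<in>{i, k}. Z l \<omega>)"
    using False by simp
  have "integrable M (\<lambda>\<omega>. \<Prod>l\<in>{i, k}. Z l \<omega>)"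
    by (rule indep_vars_integrable[OF _ ind2]) (use int in auto)
  moreover have "expectation (\<lambda>\<omega>. \<Prod>l\<in>{i, k}. Z l \<omega>) = (\<Prod>l\<in>{i, k}. expectation (Z l))"
    by (rule indep_vars_lebesgue_integral[OF _ ind2]) (use int in auto)
  ultimately show ?thesis
    unfolding prod using mean False by simp
qed

lemma (in prob_space) expectation_prod_affine_pairs:
  fixes X :: "'j \<Rightarrow> 'k \<Rightarrow> 'a \<Rightarrow> real"
  assumes ind: "indep_vars (\<lambda>_. borel) (\<lambda>(j, k). X j k) I" and J: "finite J"
    and sq: "\<And>j k. (j, k) \<in> I \<Longrightarrow> integrable M (\<lambda>\<omega>. (X j k \<omega>)\<^sup>2)"
    and mean: "\<And>j k. (j, k) \<in> I \<Longrightarrow> expectation (X j k) = 0"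
    and xy: "\<And>j. j \<in> J \<Longrightarrow> (j, x j) \<in> I" "\<And>j. j \<in> J \<Longrightarrow> (j, y j) \<in> I"
  shows "integrable M (\<lambda>\<omega>. \<Prod>j\<in>J. (t j + \<alpha> * X j (x j) \<omega>) * (s j + \<beta> * X j (y j) \<omega>)) \<and>
    expectation (\<lambda>\<omega>. \<Prod>j\<in>J. (t j + \<alpha> * X j (x j) \<omega>) * (s j + \<beta> * X j (y j) \<omega>)) =
    (\<Prod>j\<in>J. t j * s j + (if x j = y j then \<alpha> * \<beta> * expectation (\<lambda>\<omega>. (X j (x j) \<omega>)\<^sup>2) else 0))"
proof -
  define F where "F j \<omega> = (t j + \<alpha> * X j (x j) \<omega>) * (s j + \<beta> * X j (y j) \<omega>)" for j \<omega>
  define K where "K j = {(j, x j), (j, y j)}" for j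
  define G where "G j g = (t j + \<alpha> * g (j, x j)) * (s j + \<beta> * g (j, y j))" for j and g :: "'j \<times> 'k \<Rightarrow> real"
  have "indep_vars (\<lambda>j. PiM (K j) (\<lambda>_. borel)) (\<lambda>j \<omega>. restrict (\<lambda>i. (\<lambda>(j, k). X j k) i \<omega>) (K j)) J"
    by (rule indep_vars_restrict[OF ind]) (auto simp: K_def xy disjoint_family_on_def)
  moreover have "G j \<in> borel_measurable (PiM (K j) (\<lambda>_. borel))" for j
  proof -
    have "(j, x j) \<in> K j" "(j, y j) \<in> K j" by (auto simp: K_def)
    then show ?thesis unfolding G_def by measurable
  qed
  ultimately have "indep_vars (\<lambda>_. borel) (\<lambda>j \<omega>. G j (restrict (\<lambda>i. (\<lambda>(j, k). X j k) i \<omega>) (K j))) J"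
    by (rule indep_vars_compose2)
  then have ind_F: "indep_vars (\<lambda>_. borel) F J"
    by (rule indep_vars_cong[THEN iffD1, rotated 3]) (auto simp: F_def G_def K_def)
  have F: "integrable M (F j) \<and> expectation (F j) =
      t j * s j + (if x j = y j then \<alpha> * \<beta> * expectation (\<lambda>\<omega>. (X j (x j) \<omega>)\<^sup>2) else 0)"
    if "j \<in> J" for j
  proof -
    have "F j = (\<lambda>\<omega>. t j * s j + t j * \<beta> * X j (y j) \<omega> + s j * \<alpha> * X j (x j) \<omega>
        + \<alpha> * \<beta> * (X j (x j) \<omega> * X j (y j) \<omega>))"
      by (auto simp: F_def algebra_simps)
    moreover have "random_variable borel (X j (x j))" "random_variable borel (X j (y j))"
      using ind xy that unfolding indep_vars_def by force+
    then have "integrable M (X j (x j))" "integrable M (X j (y j))"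
      using sq xy that square_integrable_imp_integrable by blast+
    moreover have "integrable M (\<lambda>\<omega>. X j (x j) \<omega> * X j (y j) \<omega>) \<and>
        expectation (\<lambda>\<omega>. X j (x j) \<omega> * X j (y j) \<omega>) =
        (if x j = y j then expectation (\<lambda>\<omega>. (X j (x j) \<omega>)\<^sup>2) else 0)"
      using expectation_mult_centered[OF ind xy(1)[OF that] xy(2)[OF that]] sq mean xy that by simp
    ultimately show ?thesis
      using mean xy that by (simp add: prob_space)
  qed
  have "expectation (\<lambda>\<omega>. \<Prod>j\<in>J. F j \<omega>) = (\<Prod>j\<in>J. expectation (F j))"
    using indep_vars_lebesgue_integral[OF J ind_F] F by simp
  also have "\<dots> = (\<Prod>j\<in>J. t j * s j + (if x j = y j then \<alpha> * \<beta> * expectation (\<lambda>\<omega>. (X j (x j) \<omega>)\<^sup>2) else 0))"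
    using F by (intro prod.cong) auto
  finally show ?thesis
    using indep_vars_integrable[OF J ind_F] F by (simp add: F_def)
qed

section \<open>The second moment of the contraction error\<close>

definition fibre :: "'e set \<Rightarrow> ('e \<Rightarrow> nat set) \<Rightarrow> ('e \<Rightarrow> nat) \<Rightarrow> ('e \<Rightarrow> nat) \<Rightarrow> ('e \<Rightarrow> nat) set" where
  "fibre E ends d b = {a \<in> idx_on E d. restr (open_edges E ends) a = b}"

abbreviation site_proj :: "'e set \<Rightarrow> ('e \<Rightarrow> nat set) \<Rightarrow> nat \<Rightarrow> ('e \<Rightarrow> nat) \<Rightarrow> ('e \<Rightarrow> nat)" where
  "site_proj E ends j a \<equiv> restr (site_edges E ends j) a"

lemma finite_idx_on: "finite S \<Longrightarrow> finite (idx_on S d)"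
  by (rule finite_subset[OF _ finite_set_of_finite_funs[of S "\<Union>e\<in>S. {..<d e}" 0]])
     (auto simp: idx_on_def)

lemma contract_eq_sum_fibre:
  "contract n E ends d T b = (\<Sum>a\<in>fibre E ends d b. \<Prod>j<n. T j (site_proj E ends j a))"
  unfolding contract_def fibre_def ..

lemma finite_site_idx: "tn_graph n E ends d \<Longrightarrow> finite (site_idx E ends d j)"
  unfolding site_idx_def tn_graph_def site_edges_def by (simp add: finite_idx_on)

lemma site_proj_in_site_idx: "a \<in> fibre E ends d b \<Longrightarrow> site_proj E ends j a \<in> site_idx E ends d j"
  unfolding fibre_def site_idx_def idx_on_def restr_def site_edges_def by auto

lemma zero_in_site_idx: "tn_graph n E ends d \<Longrightarrow> (\<lambda>_. 0) \<in> site_idx E ends d j"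
  unfolding tn_graph_def site_idx_def idx_on_def site_edges_def by force

lemma card_site_idx_pos: "tn_graph n E ends d \<Longrightarrow> 0 < card (site_idx E ends d j)"
  using finite_site_idx zero_in_site_idx card_gt_0_iff by blast

lemma contract_norm_sq:
  "(contract_norm n E ends d T)\<^sup>2 = (\<Sum>b\<in>out_idx E ends d. (contract n E ends d T b)\<^sup>2)"
  unfolding contract_norm_def frob_def by (simp add: sum_nonneg)

lemma rel_err_sq_eq:
  "(rel_err n E ends d T D)\<^sup>2 = (\<Sum>b\<in>out_idx E ends d. \<Sum>a\<in>fibre E ends d b. \<Sum>a'\<in>fibre E ends d b.
      ((\<Prod>j<n. T j (site_proj E ends j a) + D j (site_proj E ends j a)) - (\<Prod>j<n. T j (site_proj E ends j a)))
    * ((\<Prod>j<n. T j (site_proj E ends j a') + D j (site_proj E ends j a')) - (\<Prod>j<n. T j (site_proj E ends j a'))))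
    / (contract_norm n E ends d T)\<^sup>2"
proof -
  have "contract n E ends d (\<lambda>j a. T j a + D j a) b - contract n E ends d T b =
      (\<Sum>a\<in>fibre E ends d b. (\<Prod>j<n. T j (site_proj E ends j a) + D j (site_proj E ends j a))
         - (\<Prod>j<n. T j (site_proj E ends j a)))" for b
    unfolding contract_eq_sum_fibre by (simp add: sum_subtractf)
  then have "(rel_err n E ends d T D)\<^sup>2 = (\<Sum>b\<in>out_idx E ends d. (\<Sum>a\<in>fibre E ends d b.
      (\<Prod>j<n. T j (site_proj E ends j a) + D j (site_proj E ends j a))
       - (\<Prod>j<n. T j (site_proj E ends j a)))\<^sup>2) / (contract_norm n E ends d T)\<^sup>2"
    unfolding rel_err_def frob_def by (simp add: power_divide sum_nonneg)
  then show ?thesis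
    by (simp add: power2_eq_square sum_product)
qed

text \<open>The value of \<open>E \<parallel>T^ - T\<parallel>\<^sub>F\<^sup>2\<close> when the entries of the perturbation at each site \<open>j\<close>
  are independent, centred and of variance \<open>v j\<close>.\<close>
definition sq_err_moment :: "nat \<Rightarrow> 'e set \<Rightarrow> ('e \<Rightarrow> nat set) \<Rightarrow> ('e \<Rightarrow> nat)
    \<Rightarrow> (nat \<Rightarrow> ('e \<Rightarrow> nat) \<Rightarrow> real) \<Rightarrow> (nat \<Rightarrow> real) \<Rightarrow> real" where
  "sq_err_moment n E ends d T v = (\<Sum>b\<in>out_idx E ends d. \<Sum>a\<in>fibre E ends d b. \<Sum>a'\<in>fibre E ends d b.
     (\<Prod>j<n. T j (site_proj E ends j a) * T j (site_proj E ends j a')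
        + (if site_proj E ends j a = site_proj E ends j a' then v j else 0))
     - (\<Prod>j<n. T j (site_proj E ends j a) * T j (site_proj E ends j a')))"

text \<open>Under \<open>sitewise_noise\<close> all entries of a site share one variance; we read it off at the
  all-zero index, which lies in every \<open>site_idx\<close>.\<close>
definition site_variance :: "'w measure \<Rightarrow> (nat \<Rightarrow> ('e \<Rightarrow> nat) \<Rightarrow> 'w \<Rightarrow> real) \<Rightarrow> nat \<Rightarrow> real" where
  "site_variance M \<delta> j = integral\<^sup>L M (\<lambda>\<omega>. (\<delta> j (\<lambda>_. 0) \<omega>)\<^sup>2)"

lemma site_variance_nonneg: "0 \<le> site_variance M \<delta> j"
  unfolding site_variance_def by simp

lemma site_variance_eq_entry:
  assumes tn: "tn_graph n E ends d" and sn: "sitewise_noise n E ends d M \<delta>"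
    and j: "j < n" and a: "a \<in> site_idx E ends d j"
  shows "integral\<^sup>L M (\<lambda>\<omega>. (\<delta> j a \<omega>)\<^sup>2) = site_variance M \<delta> j"
proof -
  have z: "(\<lambda>_. 0) \<in> site_idx E ends d j" by (rule zero_in_site_idx[OF tn])
  obtain w where "\<forall>a\<in>site_idx E ends d j.
      integral\<^sup>L M (\<lambda>\<omega>. (\<delta> j a \<omega> - integral\<^sup>L M (\<delta> j a))\<^sup>2) = w"
    using sn j unfolding sitewise_noise_def by blast
  moreover have "\<forall>a\<in>site_idx E ends d j. integral\<^sup>L M (\<delta> j a) = 0"
    using sn j unfolding sitewise_noise_def by blast
  ultimately show ?thesis using a z by (simp add: site_variance_def)
qed

lemma site_variance_eq_centred:
  assumes tn: "tn_graph n E ends d" and sn: "sitewise_noise n E ends d M \<delta>" and j: "j < n"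
  shows "site_variance M \<delta> j = integral\<^sup>L M (\<lambda>\<omega>. (\<delta> j (\<lambda>_. 0) \<omega> - integral\<^sup>L M (\<delta> j (\<lambda>_. 0)))\<^sup>2)"
  using sn j zero_in_site_idx[OF tn] unfolding sitewise_noise_def site_variance_def by simp

lemma exp_site_sq_eq:
  assumes tn: "tn_graph n E ends d" and sn: "sitewise_noise n E ends d M \<delta>" and j: "j < n"
  shows "exp_site_sq E ends d M \<delta> j = real (card (site_idx E ends d j)) * site_variance M \<delta> j"
proof -
  have "exp_site_sq E ends d M \<delta> j = integral\<^sup>L M (\<lambda>\<omega>. \<Sum>a\<in>site_idx E ends d j. (\<delta> j a \<omega>)\<^sup>2)"
    unfolding exp_site_sq_def frob_def by (simp add: sum_nonneg)
  also have "\<dots> = (\<Sum>a\<in>site_idx E ends d j. integral\<^sup>L M (\<lambda>\<omega>. (\<delta> j a \<omega>)\<^sup>2))"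
    by (rule Bochner_Integration.integral_sum) (use sn j in \<open>auto simp: sitewise_noise_def\<close>)
  also have "\<dots> = (\<Sum>a\<in>site_idx E ends d j. site_variance M \<delta> j)"
    by (rule sum.cong) (simp_all add: site_variance_eq_entry[OF tn sn j])
  finally show ?thesis by simp
qed

lemma exp_rel_err2_eq_sq_err_moment:
  fixes M :: "'w measure" and \<delta> :: "nat \<Rightarrow> ('e \<Rightarrow> nat) \<Rightarrow> 'w \<Rightarrow> real"
  assumes tn: "tn_graph n E ends d" and sn: "sitewise_noise n E ends d M \<delta>"
  shows "exp_rel_err2 n E ends d T M \<delta> =
    sq_err_moment n E ends d T (site_variance M \<delta>) / (contract_norm n E ends d T)\<^sup>2"
proof -
  interpret prob_space M using sn unfolding sitewise_noise_def by blast
  let ?p = "site_proj E ends" and ?fib = "fibre E ends d"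
  let ?I = "{(j, a). j < n \<and> a \<in> site_idx E ends d j}"
  txt \<open>With \<open>\<alpha>, \<beta> \<in> {0, 1}\<close>, \<open>Q\<close> yields the four products in the expansion of the error,
    each a product over sites of independent factors.\<close>
  define Q where "Q \<alpha> \<beta> a a' \<omega> = (\<Prod>j<n. (T j (?p j a) + \<alpha> * \<delta> j (?p j a) \<omega>)
      * (T j (?p j a') + \<beta> * \<delta> j (?p j a') \<omega>))" for \<alpha> \<beta> :: real and a a' \<omega>
  have Q: "integrable M (Q \<alpha> \<beta> a a') \<and> expectation (Q \<alpha> \<beta> a a') =
      (\<Prod>j<n. T j (?p j a) * T j (?p j a')
         + (if ?p j a = ?p j a' then \<alpha> * \<beta> * site_variance M \<delta> j else 0))"
    if "a \<in> ?fib b" "a' \<in> ?fib b" for \<alpha> \<beta> a a' b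
  proof -
    have "indep_vars (\<lambda>_. borel) (\<lambda>(j, a). \<delta> j a) ?I"
      and "\<And>j a. (j, a) \<in> ?I \<Longrightarrow> integrable M (\<lambda>\<omega>. (\<delta> j a \<omega>)\<^sup>2)"
      and "\<And>j a. (j, a) \<in> ?I \<Longrightarrow> expectation (\<delta> j a) = 0"
      using sn unfolding sitewise_noise_def by auto
    then have "integrable M (Q \<alpha> \<beta> a a') \<and> expectation (Q \<alpha> \<beta> a a') =
        (\<Prod>j<n. T j (?p j a) * T j (?p j a')
         + (if ?p j a = ?p j a' then \<alpha> * \<beta> * expectation (\<lambda>\<omega>. (\<delta> j (?p j a) \<omega>)\<^sup>2) else 0))"
      unfolding Q_def
      by (rule expectation_prod_affine_pairs[OF _ finite_lessThan])
         (use that site_proj_in_site_idx in auto)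
    also have "(\<Prod>j<n. T j (?p j a) * T j (?p j a')
         + (if ?p j a = ?p j a' then \<alpha> * \<beta> * expectation (\<lambda>\<omega>. (\<delta> j (?p j a) \<omega>)\<^sup>2) else 0)) =
        (\<Prod>j<n. T j (?p j a) * T j (?p j a')
         + (if ?p j a = ?p j a' then \<alpha> * \<beta> * site_variance M \<delta> j else 0))"
      by (intro prod.cong refl) (simp add: site_variance_eq_entry[OF tn sn] site_proj_in_site_idx[OF that(1)]
          site_proj_in_site_idx[OF that(2)])
    finally show ?thesis .
  qed
  have err: "(rel_err n E ends d T (\<lambda>j a. \<delta> j a \<omega>))\<^sup>2 = (\<Sum>b\<in>out_idx E ends d. \<Sum>a\<in>?fib b. \<Sum>a'\<in>?fib b.
      Q 1 1 a a' \<omega> - Q 0 1 a a' \<omega> - Q 1 0 a a' \<omega> + Q 0 0 a a' \<omega>) / (contract_norm n E ends d T)\<^sup>2" for \<omega>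
  proof -
    have "Q \<alpha> \<beta> a a' \<omega> = (\<Prod>j<n. T j (?p j a) + \<alpha> * \<delta> j (?p j a) \<omega>)
        * (\<Prod>j<n. T j (?p j a') + \<beta> * \<delta> j (?p j a') \<omega>)" for \<alpha> \<beta> a a'
      unfolding Q_def by (rule prod.distrib)
    then show ?thesis
      unfolding rel_err_sq_eq by (simp add: algebra_simps)
  qed
  have intQ: "integrable M (Q \<alpha> \<beta> a a')" if "a \<in> ?fib b" "a' \<in> ?fib b" for \<alpha> \<beta> a a' b
    using Q[OF that] by blast
  have "exp_rel_err2 n E ends d T M \<delta> = expectation (\<lambda>\<omega>. \<Sum>b\<in>out_idx E ends d. \<Sum>a\<in>?fib b.
      \<Sum>a'\<in>?fib b. Q 1 1 a a' \<omega> - Q 0 1 a a' \<omega> - Q 1 0 a a' \<omega> + Q 0 0 a a' \<omega>)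
      / (contract_norm n E ends d T)\<^sup>2"
    unfolding exp_rel_err2_def err by simp
  also have "expectation (\<lambda>\<omega>. \<Sum>b\<in>out_idx E ends d. \<Sum>a\<in>?fib b.
      \<Sum>a'\<in>?fib b. Q 1 1 a a' \<omega> - Q 0 1 a a' \<omega> - Q 1 0 a a' \<omega> + Q 0 0 a a' \<omega>) =
    (\<Sum>b\<in>out_idx E ends d. \<Sum>a\<in>?fib b. \<Sum>a'\<in>?fib b. expectation (Q 1 1 a a')
      - expectation (Q 0 1 a a') - expectation (Q 1 0 a a') + expectation (Q 0 0 a a'))"
    using intQ by (simp add: Bochner_Integration.integral_sum Bochner_Integration.integrable_sum
          Bochner_Integration.integral_add Bochner_Integration.integral_diff)
  also have "\<dots> = sq_err_moment n E ends d T (site_variance M \<delta>)"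
    unfolding sq_err_moment_def by (intro sum.cong refl) (simp add: Q cong: if_cong)
  finally show ?thesis .
qed

section \<open>Linearization in the site variances\<close>

lemma prod_add_linear_remainder:
  fixes c w :: "'a \<Rightarrow> real"
  assumes J: "finite J" and w: "\<And>j. j \<in> J \<Longrightarrow> \<bar>w j\<bar> \<le> m" and m: "0 \<le> m" "m \<le> 1"
  shows "\<bar>(\<Prod>j\<in>J. c j + w j) - (\<Prod>j\<in>J. c j) - (\<Sum>j\<in>J. w j * (\<Prod>i\<in>J - {j}. c i))\<bar>
    \<le> 2 ^ card J * m\<^sup>2 * (\<Prod>j\<in>J. \<bar>c j\<bar> + 1)"
proof -
  txt \<open>Expand the product over the subsets \<open>S \<subseteq> J\<close> carrying a factor \<open>w\<close>: the constant and
    linear parts are the terms with \<open>card S \<le> 1\<close>, and each of the others is \<open>O(m\<^sup>2)\<close>.\<close>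
  define t where "t S = (\<Prod>i\<in>S. w i) * (\<Prod>i\<in>J - S. c i)" for S
  define H where "H = {S \<in> Pow J. 2 \<le> card S}"
  have "S \<in> insert {} ((\<lambda>j. {j}) ` J \<union> H)" if "S \<in> Pow J" for S
  proof -
    have "finite S" using that J finite_subset by auto
    then consider "card S = 0" | "card S = 1" | "2 \<le> card S" by linarith
    then show ?thesis using that \<open>finite S\<close> by cases (auto simp: H_def card_1_singleton_iff)
  qed
  then have Pow_J: "Pow J = insert {} ((\<lambda>j. {j}) ` J \<union> H)"
    by (auto simp: H_def)
  have H: "finite H" "{} \<notin> H" "(\<lambda>j. {j}) ` J \<inter> H = {}"
    using J by (auto simp: H_def)
  have "(\<Prod>j\<in>J. c j + w j) = (\<Sum>S\<in>Pow J. t S)"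
    unfolding t_def using prod_add[OF J, of w c] by (simp add: add.commute)
  also have "\<dots> = t {} + (\<Sum>j\<in>J. t {j}) + (\<Sum>S\<in>H. t S)"
  proof -
    have "{} \<notin> (\<lambda>j. {j}) ` J \<union> H" "finite ((\<lambda>j. {j}) ` J \<union> H)" using J H by auto
    then show ?thesis
      unfolding Pow_J using J H by (simp add: sum.union_disjoint sum.reindex inj_on_def add.assoc)
  qed
  finally have remainder: "(\<Prod>j\<in>J. c j + w j) - (\<Prod>j\<in>J. c j) - (\<Sum>j\<in>J. w j * (\<Prod>i\<in>J - {j}. c i))
      = (\<Sum>S\<in>H. t S)"
    by (simp add: t_def)
  have "\<bar>t S\<bar> \<le> m\<^sup>2 * (\<Prod>j\<in>J. \<bar>c j\<bar> + 1)" if "S \<in> H" for S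
  proof -
    have S: "S \<subseteq> J" "2 \<le> card S" using that by (auto simp: H_def)
    have "\<bar>\<Prod>i\<in>S. w i\<bar> \<le> (\<Prod>i\<in>S. m)"
      unfolding abs_prod using S w by (intro prod_mono) auto
    also have "\<dots> \<le> m\<^sup>2" using S m by (simp add: power_decreasing)
    finally have ws: "\<bar>\<Prod>i\<in>S. w i\<bar> \<le> m\<^sup>2" .
    have "\<bar>\<Prod>i\<in>J - S. c i\<bar> \<le> (\<Prod>i\<in>J - S. \<bar>c i\<bar> + 1)"
      unfolding abs_prod by (intro prod_mono) auto
    also have "\<dots> \<le> (\<Prod>j\<in>J. \<bar>c j\<bar> + 1)"
      using J by (intro prod_mono2) auto
    finally show ?thesis
      unfolding t_def abs_mult using ws by (intro mult_mono) auto
  qed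
  then have "\<bar>\<Sum>S\<in>H. t S\<bar> \<le> real (card H) * (m\<^sup>2 * (\<Prod>j\<in>J. \<bar>c j\<bar> + 1))"
    using sum_abs[of t H] sum_bounded_above[of H "\<lambda>S. \<bar>t S\<bar>"] by (meson order_trans)
  also have "\<dots> \<le> 2 ^ card J * (m\<^sup>2 * (\<Prod>j\<in>J. \<bar>c j\<bar> + 1))"
  proof (intro mult_right_mono)
    have "card H \<le> card (Pow J)" using J by (intro card_mono) (auto simp: H_def)
    then show "real (card H) \<le> 2 ^ card J" using J by (simp add: card_Pow)
  qed (intro mult_nonneg_nonneg prod_nonneg; simp)
  finally show ?thesis unfolding remainder by (simp add: mult.assoc)
qed

lemma env_site_frob2_eq:
  assumes tn: "tn_graph n E ends d" and j: "j < n"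
  shows "env_site_frob2 n E ends d T j = (\<Sum>b\<in>out_idx E ends d. \<Sum>a\<in>fibre E ends d b. \<Sum>a'\<in>fibre E ends d b.
      if site_proj E ends j a = site_proj E ends j a'
      then \<Prod>i\<in>{..<n} - {j}. T i (site_proj E ends i a) * T i (site_proj E ends i a') else 0)"
proof -
  let ?p = "site_proj E ends" and ?fib = "fibre E ends d" and ?S = "site_idx E ends d j"
  define R where "R a = (\<Prod>i\<in>{..<n} - {j}. T i (?p i a))" for a
  have contract_unit: "contract n E ends d (T(j := (\<lambda>a. if a = x then 1 else 0))) b
      = (\<Sum>a\<in>?fib b. if ?p j a = x then R a else 0)" for x b
    unfolding contract_eq_sum_fibre
  proof (rule sum.cong[OF refl])
    fix a
    have "(\<Prod>i\<in>{..<n} - {j}. (T(j := (\<lambda>a. if a = x then 1 else 0))) i (?p i a))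
        = (\<Prod>i\<in>{..<n} - {j}. T i (?p i a))"
      by (rule prod.cong) auto
    then have "(\<Prod>i<n. (T(j := (\<lambda>a. if a = x then 1 else 0))) i (?p i a))
        = (if ?p j a = x then 1 else 0) * (\<Prod>i\<in>{..<n} - {j}. T i (?p i a))"
      using j by (simp add: prod.remove[of "{..<n}" j])
    then show "(\<Prod>i<n. (T(j := (\<lambda>a. if a = x then 1 else 0))) i (?p i a))
        = (if ?p j a = x then R a else 0)"
      by (simp add: R_def)
  qed
  have "env_site_frob2 n E ends d T j = (\<Sum>x\<in>?S. \<Sum>b\<in>out_idx E ends d. \<Sum>a\<in>?fib b. \<Sum>a'\<in>?fib b.
      if ?p j a = x \<and> ?p j a' = x then R a * R a' else 0)"
    unfolding env_site_frob2_def contract_unit power2_eq_square sum_product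
    by (intro sum.cong refl) simp
  also have "\<dots> = (\<Sum>b\<in>out_idx E ends d. \<Sum>a\<in>?fib b. \<Sum>a'\<in>?fib b. \<Sum>x\<in>?S.
      if ?p j a = x \<and> ?p j a' = x then R a * R a' else 0)"
    by (simp only: sum.swap[of _ ?S])
  also have "\<dots> = (\<Sum>b\<in>out_idx E ends d. \<Sum>a\<in>?fib b. \<Sum>a'\<in>?fib b.
      if ?p j a = ?p j a' then R a * R a' else 0)"
  proof (intro sum.cong refl)
    fix b a a' assume a: "a \<in> ?fib b"
    have "(\<Sum>x\<in>?S. if ?p j a = x \<and> ?p j a' = x then R a * R a' else 0)
        = (\<Sum>x\<in>?S. if x = ?p j a then (if ?p j a = ?p j a' then R a * R a' else 0) else 0)"
      by (rule sum.cong) auto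
    also have "\<dots> = (if ?p j a = ?p j a' then R a * R a' else 0)"
      using finite_site_idx[OF tn] site_proj_in_site_idx[OF a] by simp
    finally show "(\<Sum>x\<in>?S. if ?p j a = x \<and> ?p j a' = x then R a * R a' else 0)
        = (if ?p j a = ?p j a' then R a * R a' else 0)" .
  qed
  also have "\<dots> = (\<Sum>b\<in>out_idx E ends d. \<Sum>a\<in>?fib b. \<Sum>a'\<in>?fib b.
      if ?p j a = ?p j a' then \<Prod>i\<in>{..<n} - {j}. T i (?p i a) * T i (?p i a') else 0)"
    unfolding R_def prod.distrib ..
  finally show ?thesis .
qed

lemma sq_err_moment_linear_bound:
  assumes tn: "tn_graph n E ends d"
  obtains B where "\<And>v m. (\<And>j. j < n \<Longrightarrow> \<bar>v j\<bar> \<le> m) \<Longrightarrow> 0 \<le> m \<Longrightarrow> m \<le> 1 \<Longrightarrow>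
      \<bar>sq_err_moment n E ends d T v - (\<Sum>j<n. v j * env_site_frob2 n E ends d T j)\<bar> \<le> B * m\<^sup>2"
proof -
  let ?p = "site_proj E ends" and ?fib = "fibre E ends d" and ?out = "out_idx E ends d"
  define c where "c a a' i = T i (?p i a) * T i (?p i a')" for a a' i
  define B where "B = (\<Sum>b\<in>?out. \<Sum>a\<in>?fib b. \<Sum>a'\<in>?fib b. 2 ^ n * (\<Prod>i<n. \<bar>c a a' i\<bar> + 1))"
  have "\<bar>sq_err_moment n E ends d T v - (\<Sum>j<n. v j * env_site_frob2 n E ends d T j)\<bar> \<le> B * m\<^sup>2"
    if v: "\<And>j. j < n \<Longrightarrow> \<bar>v j\<bar> \<le> m" and m: "0 \<le> m" "m \<le> 1" for v m
  proof -
    define w where "w a a' i = (if ?p i a = ?p i a' then v i else 0)" for a a' i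
    define D where "D a a' = (\<Prod>i<n. c a a' i + w a a' i) - (\<Prod>i<n. c a a' i)
        - (\<Sum>i<n. w a a' i * (\<Prod>k\<in>{..<n} - {i}. c a a' k))" for a a'
    have "(\<Sum>j<n. v j * env_site_frob2 n E ends d T j) = (\<Sum>j<n. \<Sum>b\<in>?out. \<Sum>a\<in>?fib b. \<Sum>a'\<in>?fib b.
        w a a' j * (\<Prod>k\<in>{..<n} - {j}. c a a' k))"
      by (auto simp: env_site_frob2_eq[OF tn] sum_distrib_left w_def c_def intro!: sum.cong)
    also have "\<dots> = (\<Sum>b\<in>?out. \<Sum>a\<in>?fib b. \<Sum>a'\<in>?fib b. \<Sum>j<n. w a a' j * (\<Prod>k\<in>{..<n} - {j}. c a a' k))"
      by (simp only: sum.swap[of _ "{..<n}"])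
    finally have "sq_err_moment n E ends d T v - (\<Sum>j<n. v j * env_site_frob2 n E ends d T j)
        = (\<Sum>b\<in>?out. \<Sum>a\<in>?fib b. \<Sum>a'\<in>?fib b. D a a')"
      unfolding sq_err_moment_def D_def by (simp add: c_def w_def sum_subtractf)
    also have "\<bar>\<dots>\<bar> \<le> (\<Sum>b\<in>?out. \<Sum>a\<in>?fib b. \<Sum>a'\<in>?fib b. \<bar>D a a'\<bar>)"
      by (intro order_trans[OF sum_abs] sum_mono) auto
    also have "\<dots> \<le> (\<Sum>b\<in>?out. \<Sum>a\<in>?fib b. \<Sum>a'\<in>?fib b. 2 ^ n * m\<^sup>2 * (\<Prod>i<n. \<bar>c a a' i\<bar> + 1))"
      unfolding D_def using v m
      by (intro sum_mono, subst card_lessThan[symmetric], intro prod_add_linear_remainder)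
         (auto simp: w_def)
    also have "\<dots> = B * m\<^sup>2"
      unfolding B_def by (simp add: sum_distrib_left sum_distrib_right mult_ac)
    finally show ?thesis .
  qed
  then show ?thesis using that by blast
qed

section \<open>Normalization and asymptotics\<close>

lemma contract_scale:
  "contract n E ends d (\<lambda>j a. k j * T j a) b = (\<Prod>j<n. k j) * contract n E ends d T b"
  unfolding contract_def by (simp add: prod.distrib sum_distrib_left)

lemma contract_norm_sq_scale:
  "(contract_norm n E ends d (\<lambda>j a. k j * T j a))\<^sup>2 = (\<Prod>j<n. k j)\<^sup>2 * (contract_norm n E ends d T)\<^sup>2"
  unfolding contract_norm_sq contract_scale by (simp add: power_mult_distrib sum_distrib_left)

lemma env_site_frob2_scale:
  assumes j: "j < n"
  shows "env_site_frob2 n E ends d (\<lambda>i a. k i * T i a) j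
    = (\<Prod>i\<in>{..<n} - {j}. k i)\<^sup>2 * env_site_frob2 n E ends d T j"
proof -
  have upd: "(\<lambda>i a. k i * T i a)(j := u) = (\<lambda>i a. (k(j := 1)) i * (T(j := u)) i a)" for u
    by (auto simp: fun_eq_iff)
  have "(\<Prod>i<n. (k(j := 1)) i) = (\<Prod>i\<in>{..<n} - {j}. k i)"
    using j by (simp add: prod.remove[of "{..<n}" j] prod.cong[of _ _ "k(j := 1)" k])
  then show ?thesis
    unfolding env_site_frob2_def upd contract_scale
    by (simp only: power_mult_distrib sum_distrib_left)
qed

lemma normalize_tn_ratio:
  assumes tn: "tn_graph n E ends d" and T: "\<forall>j<n. site_norm E ends d T j \<noteq> 0"
    and cn: "contract_norm n E ends d T \<noteq> 0"
  shows "env_frob2 n E ends d (normalize_tn E ends d T)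
      / (contract_norm n E ends d (normalize_tn E ends d T))\<^sup>2
    = (\<Sum>j<n. env_site_frob2 n E ends d T j
        * ((site_norm E ends d T j)\<^sup>2 / real (card (site_idx E ends d j))))
      / (contract_norm n E ends d T)\<^sup>2"
proof -
  define k where "k j = sqrt (real (card (site_idx E ends d j))) / site_norm E ends d T j" for j
  have nt: "normalize_tn E ends d T = (\<lambda>j a. k j * T j a)"
    unfolding normalize_tn_def k_def by (auto simp: fun_eq_iff)
  have N: "0 < real (card (site_idx E ends d j))" for j
    using card_site_idx_pos[OF tn] by simp
  have k: "k j \<noteq> 0" if "j < n" for j
    using N[of j] T that by (simp add: k_def)
  have "env_site_frob2 n E ends d (\<lambda>i a. k i * T i a) j
      / (contract_norm n E ends d (\<lambda>j a. k j * T j a))\<^sup>2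
    = env_site_frob2 n E ends d T j * ((site_norm E ends d T j)\<^sup>2 / real (card (site_idx E ends d j)))
      / (contract_norm n E ends d T)\<^sup>2"
    if j: "j < n" for j
  proof -
    have "(\<Prod>i<n. k i) = k j * (\<Prod>i\<in>{..<n} - {j}. k i)"
      using j by (simp add: prod.remove)
    moreover have "(\<Prod>i\<in>{..<n} - {j}. k i) \<noteq> 0" using k by auto
    moreover have "(k j)\<^sup>2 = real (card (site_idx E ends d j)) / (site_norm E ends d T j)\<^sup>2"
      using N[of j] by (simp add: k_def power_divide)
    ultimately show ?thesis
      unfolding env_site_frob2_scale[OF j] contract_norm_sq_scale
      using k[OF j] N[of j] T j cn by (simp add: power_mult_distrib field_simps)
  qed
  then show ?thesis
    unfolding nt env_frob2_def sum_divide_distrib by simp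
qed

lemma exp_rel_err2_expansion:
  fixes M :: "real \<Rightarrow> 'w measure" and \<delta> :: "real \<Rightarrow> nat \<Rightarrow> ('e \<Rightarrow> nat) \<Rightarrow> 'w \<Rightarrow> real"
  assumes tn: "tn_graph n E ends d" and cn: "contract_norm n E ends d T \<noteq> 0"
    and \<rho>: "\<And>j. 0 \<le> \<rho> j"
    and noise: "\<And>\<epsilon>. 0 < \<epsilon> \<Longrightarrow> sitewise_noise n E ends d (M \<epsilon>) (\<delta> \<epsilon>)"
    and var: "\<And>\<epsilon> j. 0 < \<epsilon> \<Longrightarrow> j < n \<Longrightarrow> site_variance (M \<epsilon>) (\<delta> \<epsilon>) j \<le> \<epsilon>\<^sup>2 * \<rho> j"
  shows "(\<lambda>\<epsilon>. exp_rel_err2 n E ends d T (M \<epsilon>) (\<delta> \<epsilon>)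
      - (\<Sum>j<n. site_variance (M \<epsilon>) (\<delta> \<epsilon>) j * env_site_frob2 n E ends d T j)
        / (contract_norm n E ends d T)\<^sup>2) \<in> O[at_right 0](\<lambda>\<epsilon>. \<epsilon> ^ 4)"
proof -
  let ?cn = "contract_norm n E ends d T" and ?L = "env_site_frob2 n E ends d T"
  obtain B where bound: "\<And>v m. (\<And>j. j < n \<Longrightarrow> \<bar>v j\<bar> \<le> m) \<Longrightarrow> 0 \<le> m \<Longrightarrow> m \<le> 1 \<Longrightarrow>
      \<bar>sq_err_moment n E ends d T v - (\<Sum>j<n. v j * ?L j)\<bar> \<le> B * m\<^sup>2"
    using sq_err_moment_linear_bound[OF tn] by blast
  define c where "c = (\<Sum>j<n. \<rho> j)"
  have c: "0 \<le> c" unfolding c_def using \<rho> by (simp add: sum_nonneg)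
  have "((\<lambda>\<epsilon>::real. c * \<epsilon>\<^sup>2) \<longlongrightarrow> 0) (at_right 0)"
    by real_asymp
  then have "eventually (\<lambda>\<epsilon>. c * \<epsilon>\<^sup>2 < 1) (at_right 0)"
    by (rule order_tendstoD) simp
  then have "eventually (\<lambda>\<epsilon>. 0 < \<epsilon> \<and> c * \<epsilon>\<^sup>2 \<le> 1) (at_right 0)"
    using eventually_at_right_less[of 0] by eventually_elim auto
  then show ?thesis
  proof (rule bigoI[OF eventually_mono])
    fix \<epsilon> :: real assume \<epsilon>: "0 < \<epsilon> \<and> c * \<epsilon>\<^sup>2 \<le> 1"
    let ?v = "site_variance (M \<epsilon>) (\<delta> \<epsilon>)"
    have "\<bar>?v j\<bar> \<le> c * \<epsilon>\<^sup>2" if "j < n" for j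
    proof -
      have "\<rho> j \<le> c" unfolding c_def using \<rho> that by (intro member_le_sum) auto
      then have "\<epsilon>\<^sup>2 * \<rho> j \<le> c * \<epsilon>\<^sup>2" by (simp add: mult.commute mult_right_mono)
      then show ?thesis using var[of \<epsilon> j] that \<epsilon> site_variance_nonneg[of "M \<epsilon>" "\<delta> \<epsilon>" j]
        by linarith
    qed
    then have "\<bar>sq_err_moment n E ends d T ?v - (\<Sum>j<n. ?v j * ?L j)\<bar> \<le> B * (c * \<epsilon>\<^sup>2)\<^sup>2"
      using bound c \<epsilon> by simp
    moreover have "exp_rel_err2 n E ends d T (M \<epsilon>) (\<delta> \<epsilon>) - (\<Sum>j<n. ?v j * ?L j) / ?cn\<^sup>2
        = (sq_err_moment n E ends d T ?v - (\<Sum>j<n. ?v j * ?L j)) / ?cn\<^sup>2"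
      using exp_rel_err2_eq_sq_err_moment[OF tn noise] \<epsilon> by (simp add: diff_divide_distrib)
    ultimately show "norm (exp_rel_err2 n E ends d T (M \<epsilon>) (\<delta> \<epsilon>) - (\<Sum>j<n. ?v j * ?L j) / ?cn\<^sup>2)
        \<le> B * c\<^sup>2 / ?cn\<^sup>2 * norm (\<epsilon> ^ 4)"
      using cn by (simp add: abs_divide divide_right_mono power_mult_distrib)
  qed
qed

lemma env_site_frob2_nonneg: "0 \<le> env_site_frob2 n E ends d T j"
  unfolding env_site_frob2_def by (intro sum_nonneg) auto

lemma quartic_bigo_cubic: "(\<lambda>\<epsilon>::real. \<epsilon> ^ 4) \<in> O[at_right 0](\<lambda>\<epsilon>. \<epsilon> ^ 3)"
  by real_asymp

lemma exp_rel_err2_upper_asymp: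
  fixes M :: "real \<Rightarrow> 'w measure" and \<delta> :: "real \<Rightarrow> nat \<Rightarrow> ('e \<Rightarrow> nat) \<Rightarrow> 'w \<Rightarrow> real"
  assumes tn: "tn_graph n E ends d" and cn: "contract_norm n E ends d T \<noteq> 0"
    and \<rho>: "\<And>j. 0 \<le> \<rho> j"
    and noise: "\<And>\<epsilon>. 0 < \<epsilon> \<Longrightarrow> sitewise_noise n E ends d (M \<epsilon>) (\<delta> \<epsilon>)"
    and var: "\<And>\<epsilon> j. 0 < \<epsilon> \<Longrightarrow> j < n \<Longrightarrow> site_variance (M \<epsilon>) (\<delta> \<epsilon>) j \<le> \<epsilon>\<^sup>2 * \<rho> j"
  shows "\<exists>C. eventually (\<lambda>\<epsilon>. exp_rel_err2 n E ends d T (M \<epsilon>) (\<delta> \<epsilon>)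
      \<le> \<epsilon>\<^sup>2 * ((\<Sum>j<n. env_site_frob2 n E ends d T j * \<rho> j) / (contract_norm n E ends d T)\<^sup>2)
        + C * \<epsilon> ^ 3) (at_right 0)"
proof -
  let ?cn = "contract_norm n E ends d T" and ?L = "env_site_frob2 n E ends d T"
  let ?S = "\<lambda>\<epsilon>. (\<Sum>j<n. site_variance (M \<epsilon>) (\<delta> \<epsilon>) j * ?L j) / ?cn\<^sup>2"
  have "(\<lambda>\<epsilon>. exp_rel_err2 n E ends d T (M \<epsilon>) (\<delta> \<epsilon>) - ?S \<epsilon>) \<in> O[at_right 0](\<lambda>\<epsilon>. \<epsilon> ^ 3)"
    by (rule landau_o.big_trans[OF exp_rel_err2_expansion[OF tn cn \<rho> noise var] quartic_bigo_cubic])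
  then obtain C where C: "eventually (\<lambda>\<epsilon>. norm (exp_rel_err2 n E ends d T (M \<epsilon>) (\<delta> \<epsilon>) - ?S \<epsilon>)
      \<le> C * norm (\<epsilon> ^ 3)) (at_right 0)"
    by (rule landau_o.bigE)
  have S_le: "?S \<epsilon> \<le> \<epsilon>\<^sup>2 * ((\<Sum>j<n. ?L j * \<rho> j) / ?cn\<^sup>2)" if "0 < \<epsilon>" for \<epsilon>
  proof -
    have "(\<Sum>j<n. site_variance (M \<epsilon>) (\<delta> \<epsilon>) j * ?L j) \<le> (\<Sum>j<n. \<epsilon>\<^sup>2 * \<rho> j * ?L j)"
      using var[OF that] env_site_frob2_nonneg by (intro sum_mono mult_right_mono) auto
    then show ?thesis
      by (simp add: sum_distrib_left mult_ac divide_right_mono)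
  qed
  have "eventually (\<lambda>\<epsilon>. exp_rel_err2 n E ends d T (M \<epsilon>) (\<delta> \<epsilon>)
      \<le> \<epsilon>\<^sup>2 * ((\<Sum>j<n. ?L j * \<rho> j) / ?cn\<^sup>2) + C * \<epsilon> ^ 3) (at_right 0)"
    using C eventually_at_right_less[of 0]
  proof eventually_elim
    case (elim \<epsilon>)
    then show ?case using S_le[of \<epsilon>] by simp
  qed
  then show ?thesis ..
qed

lemma exp_rel_err2_asymp:
  fixes M :: "real \<Rightarrow> 'w measure" and \<delta> :: "real \<Rightarrow> nat \<Rightarrow> ('e \<Rightarrow> nat) \<Rightarrow> 'w \<Rightarrow> real"
  assumes tn: "tn_graph n E ends d" and cn: "contract_norm n E ends d T \<noteq> 0"
    and \<rho>: "\<And>j. 0 \<le> \<rho> j"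
    and noise: "\<And>\<epsilon>. 0 < \<epsilon> \<Longrightarrow> sitewise_noise n E ends d (M \<epsilon>) (\<delta> \<epsilon>)"
    and var: "\<And>\<epsilon> j. 0 < \<epsilon> \<Longrightarrow> j < n \<Longrightarrow> site_variance (M \<epsilon>) (\<delta> \<epsilon>) j = \<epsilon>\<^sup>2 * \<rho> j"
  shows "(\<lambda>\<epsilon>. exp_rel_err2 n E ends d T (M \<epsilon>) (\<delta> \<epsilon>)
      - \<epsilon>\<^sup>2 * ((\<Sum>j<n. env_site_frob2 n E ends d T j * \<rho> j) / (contract_norm n E ends d T)\<^sup>2))
    \<in> O[at_right 0](\<lambda>\<epsilon>. \<epsilon> ^ 3)"
proof -
  let ?cn = "contract_norm n E ends d T" and ?L = "env_site_frob2 n E ends d T"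
  let ?S = "\<lambda>\<epsilon>. (\<Sum>j<n. site_variance (M \<epsilon>) (\<delta> \<epsilon>) j * ?L j) / ?cn\<^sup>2"
  have bigo: "(\<lambda>\<epsilon>. exp_rel_err2 n E ends d T (M \<epsilon>) (\<delta> \<epsilon>) - ?S \<epsilon>) \<in> O[at_right 0](\<lambda>\<epsilon>. \<epsilon> ^ 3)"
  proof (rule landau_o.big_trans[OF exp_rel_err2_expansion[OF tn cn \<rho> noise] quartic_bigo_cubic])
    show "site_variance (M \<epsilon>) (\<delta> \<epsilon>) j \<le> \<epsilon>\<^sup>2 * \<rho> j" if "0 < \<epsilon>" "j < n" for \<epsilon> j
      using var[OF that] by simp
  qed
  have S_eq: "?S \<epsilon> = \<epsilon>\<^sup>2 * ((\<Sum>j<n. ?L j * \<rho> j) / ?cn\<^sup>2)" if "0 < \<epsilon>" for \<epsilon>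
    using var[OF that] by (simp add: sum_distrib_left mult_ac)
  have "eventually (\<lambda>\<epsilon>. exp_rel_err2 n E ends d T (M \<epsilon>) (\<delta> \<epsilon>) - ?S \<epsilon>
      = exp_rel_err2 n E ends d T (M \<epsilon>) (\<delta> \<epsilon>) - \<epsilon>\<^sup>2 * ((\<Sum>j<n. ?L j * \<rho> j) / ?cn\<^sup>2)) (at_right 0)"
    using eventually_at_right_less[of 0] by eventually_elim (simp add: S_eq)
  then show ?thesis
    using landau_o.big.in_cong bigo by fast
qed

theorem mainTheorem6:
  fixes n :: nat and E :: "'e set" and ends :: "'e \<Rightarrow> nat set" and d :: "'e \<Rightarrow> nat"
    and T :: "nat \<Rightarrow> ('e \<Rightarrow> nat) \<Rightarrow> real"
  assumes "tn_graph n E ends d"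
    and "\<forall>j<n. site_norm E ends d T j \<noteq> 0"
    and "contract_norm n E ends d T \<noteq> 0"
  defines "K \<equiv> env_frob2 n E ends d (normalize_tn E ends d T)
                / (contract_norm n E ends d (normalize_tn E ends d T))\<^sup>2"
    and "K' \<equiv> env_frob2 n E ends d T / (contract_norm n E ends d T)\<^sup>2"
  shows
    "(\<forall>(M :: real \<Rightarrow> 'w measure) \<delta>.
        (\<forall>\<epsilon>>0. sitewise_noise n E ends d (M \<epsilon>) (\<delta> \<epsilon>) \<and>
           (\<forall>j<n. exp_site_sq E ends d (M \<epsilon>) (\<delta> \<epsilon>) j \<le> \<epsilon>\<^sup>2 * (site_norm E ends d T j)\<^sup>2))
        \<longrightarrow> (\<exists>C. eventually (\<lambda>\<epsilon>. exp_rel_err2 n E ends d T (M \<epsilon>) (\<delta> \<epsilon>) \<le> \<epsilon>\<^sup>2 * K + C * \<epsilon> ^ 3)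
                     (at_right 0)))
     \<and> (\<forall>(M :: real \<Rightarrow> 'w measure) \<delta>.
        (\<forall>\<epsilon>>0. sitewise_noise n E ends d (M \<epsilon>) (\<delta> \<epsilon>) \<and>
           (\<forall>j<n. exp_site_sq E ends d (M \<epsilon>) (\<delta> \<epsilon>) j = \<epsilon>\<^sup>2 * (site_norm E ends d T j)\<^sup>2))
        \<longrightarrow> (\<lambda>\<epsilon>. exp_rel_err2 n E ends d T (M \<epsilon>) (\<delta> \<epsilon>) - \<epsilon>\<^sup>2 * K) \<in> O[at_right 0](\<lambda>\<epsilon>. \<epsilon> ^ 3))
     \<and> (\<forall>(M :: real \<Rightarrow> 'v measure) \<delta>.
        (\<forall>\<sigma>>0. sitewise_noise n E ends d (M \<sigma>) (\<delta> \<sigma>) \<and>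
           (\<forall>j<n. \<forall>a\<in>site_idx E ends d j.
              integral\<^sup>L (M \<sigma>) (\<lambda>\<omega>. (\<delta> \<sigma> j a \<omega> - integral\<^sup>L (M \<sigma>) (\<delta> \<sigma> j a))\<^sup>2) = \<sigma>\<^sup>2))
        \<longrightarrow> (\<lambda>\<sigma>. exp_rel_err2 n E ends d T (M \<sigma>) (\<delta> \<sigma>) - \<sigma>\<^sup>2 * K') \<in> O[at_right 0](\<lambda>\<sigma>. \<sigma> ^ 3))"
proof -
  note tn = assms(1) and cn = assms(3)
  let ?L = "env_site_frob2 n E ends d T" and ?cn = "contract_norm n E ends d T"
  define r where "r j = (site_norm E ends d T j)\<^sup>2 / real (card (site_idx E ends d j))" for j
  have N: "0 < real (card (site_idx E ends d j))" for j
    using card_site_idx_pos[OF tn] by simp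
  have r: "0 \<le> r j" for j
    unfolding r_def by simp
  have K: "K = (\<Sum>j<n. ?L j * r j) / ?cn\<^sup>2"
    unfolding K_def normalize_tn_ratio[OF assms(1-3)] r_def ..
  have K': "K' = (\<Sum>j<n. ?L j * 1) / ?cn\<^sup>2"
    unfolding K'_def env_frob2_def by simp
  have var_le: "site_variance M \<delta> j \<le> \<epsilon>\<^sup>2 * r j"
    if "sitewise_noise n E ends d M \<delta>" "j < n"
      "exp_site_sq E ends d M \<delta> j \<le> \<epsilon>\<^sup>2 * (site_norm E ends d T j)\<^sup>2"
    for M :: "'w measure" and \<delta> j \<epsilon>
    using that exp_site_sq_eq[OF tn that(1,2)] N[of j] by (simp add: r_def field_simps)
  have var_eq: "site_variance M \<delta> j = \<epsilon>\<^sup>2 * r j"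
    if "sitewise_noise n E ends d M \<delta>" "j < n"
      "exp_site_sq E ends d M \<delta> j = \<epsilon>\<^sup>2 * (site_norm E ends d T j)\<^sup>2"
    for M :: "'w measure" and \<delta> j \<epsilon>
    using that exp_site_sq_eq[OF tn that(1,2)] N[of j] by (simp add: r_def field_simps)
  have var_centred: "site_variance M \<delta> j = \<sigma>\<^sup>2"
    if "sitewise_noise n E ends d M \<delta>" "j < n"
      "\<forall>a\<in>site_idx E ends d j. integral\<^sup>L M (\<lambda>\<omega>. (\<delta> j a \<omega> - integral\<^sup>L M (\<delta> j a))\<^sup>2) = \<sigma>\<^sup>2"
    for M :: "'v measure" and \<delta> j \<sigma>
    using that site_variance_eq_centred[OF tn that(1,2)] zero_in_site_idx[OF tn] by simp
  show ?thesis
    unfolding K K'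
    by (intro conjI allI impI exp_rel_err2_upper_asymp[OF tn cn r] exp_rel_err2_asymp[OF tn cn r]
        exp_rel_err2_asymp[OF tn cn, where \<rho> = "\<lambda>_. 1"])
       (auto intro: var_le var_eq var_centred)
qed

end
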